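(* In any tree $T=(V,E)$, $$n_T(\mathcal{L}_5)=\frac12\sum_{st\in E}\big(g_2(s,t)+g_2(t,s)\big),\qquad g_2(s,t)=(k_t-1)(\xi(s)-k_t-k_s+1).$$
   Context: $k_x$ is the degree of $x$, $\xi(s)=\sum_{t\in\Gamma(s)}k_t$ the sum of the degrees of the neighbours of $s$. $\mathcal{L}_5$ is the path on 5 vertices and $n_T(\mathcal{L}_5)$ the number of subgraphs of $T$ isomorphic to it. *)

theory Defs
  imports Complex_Main
begin

definition simple_graph :: "'a set \<Rightarrow> 'a set set \<Rightarrow> bool" where
  "simple_graph V E \<longleftrightarrow> finite V \<and>
     (\<forall>e\<in>E. \<exists>u v. u \<in> V \<and> v \<in> V \<and> u \<noteq> v \<and> e = {u, v})"

definition walk :: "'a set set \<Rightarrow> 'a list \<Rightarrow> bool" where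
  "walk E xs \<longleftrightarrow> xs \<noteq> [] \<and> (\<forall>i. Suc i < length xs \<longrightarrow> {xs ! i, xs ! Suc i} \<in> E)"

definition connected_graph :: "'a set \<Rightarrow> 'a set set \<Rightarrow> bool" where
  "connected_graph V E \<longleftrightarrow>
     (\<forall>u\<in>V. \<forall>v\<in>V. \<exists>xs. walk E xs \<and> hd xs = u \<and> last xs = v)"

definition is_cycle :: "'a set set \<Rightarrow> 'a list \<Rightarrow> bool" where
  "is_cycle E xs \<longleftrightarrow> length xs \<ge> 3 \<and> distinct xs \<and> walk E xs \<and> {last xs, hd xs} \<in> E"

definition tree :: "'a set \<Rightarrow> 'a set set \<Rightarrow> bool" where
  "tree V E \<longleftrightarrow> simple_graph V E \<and> V \<noteq> {} \<and> connected_graph V E \<and> \<not> (\<exists>xs. is_cycle E xs)"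

definition nbrs :: "'a set \<Rightarrow> 'a set set \<Rightarrow> 'a \<Rightarrow> 'a set" where
  "nbrs V E s = {t \<in> V. {s, t} \<in> E}"

definition deg :: "'a set \<Rightarrow> 'a set set \<Rightarrow> 'a \<Rightarrow> nat" where
  "deg V E x = card (nbrs V E x)"

definition xi :: "'a set \<Rightarrow> 'a set set \<Rightarrow> 'a \<Rightarrow> nat" where
  "xi V E s = (\<Sum>t\<in>nbrs V E s. deg V E t)"

definition g2 :: "'a set \<Rightarrow> 'a set set \<Rightarrow> 'a \<Rightarrow> 'a \<Rightarrow> real" where
  "g2 V E s t = (real (deg V E t) - 1) *
                (real (xi V E s) - real (deg V E t) - real (deg V E s) + 1)"

text \<open>Number of subgraphs isomorphic to the path L_5 on 5 vertices: such a subgraph is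
  determined by its edge set {v0v1, v1v2, v2v3, v3v4} with v0..v4 distinct vertices.\<close>
definition n_L5 :: "'a set \<Rightarrow> 'a set set \<Rightarrow> nat" where
  "n_L5 V E = card {F. F \<subseteq> E \<and>
     (\<exists>xs. length xs = 5 \<and> distinct xs \<and> set xs \<subseteq> V \<and>
           F = {{xs ! i, xs ! Suc i} | i. i < 4})}"

end

theory Submission
  imports Defs
begin

text \<open>
  Every copy of \<open>L\<^sub>5\<close> is the edge set of exactly two vertex sequences
  \<open>v\<^sub>0 v\<^sub>1 v\<^sub>2 v\<^sub>3 v\<^sub>4\<close> of a path (the sequence and its reversal), so
  \<open>2 n\<^sub>T(L\<^sub>5)\<close> counts such sequences. Classify them by the arc
  \<open>(v\<^sub>2, v\<^sub>1) = (s, t)\<close>: then \<open>v\<^sub>0 \<in> \<Gamma>(t) - {s}\<close>,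
  \<open>v\<^sub>3 = u \<in> \<Gamma>(s) - {t}\<close> and \<open>v\<^sub>4 \<in> \<Gamma>(u) - {s}\<close>. Because a tree has no
  triangles and no 4-cycles, every such choice gives five distinct vertices, so there are
  \<open>(k\<^sub>t - 1) \<Sum>\<^sub>u (k\<^sub>u - 1) = g\<^sub>2(s, t)\<close> of them. Summing over all arcs counts
  each edge once in each orientation.
\<close>

lemma card_eq_sum_card_fibres:
  assumes "finite A" "finite B" "f ` A \<subseteq> B"
  shows "card A = (\<Sum>b\<in>B. card {x \<in> A. f x = b})"
  using sum.group[OF assms, of "\<lambda>_. 1::nat"] by simp

lemma card_eq_double_card_image:
  assumes "finite A" and "\<And>x. x \<in> A \<Longrightarrow> card {y \<in> A. f y = f x} = 2"
  shows "card A = 2 * card (f ` A)"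
proof -
  have "card A = (\<Sum>b\<in>f ` A. card {x \<in> A. f x = b})"
    using assms(1) by (intro card_eq_sum_card_fibres) auto
  also have "\<dots> = (\<Sum>b\<in>f ` A. 2)"
    using assms(2) by (intro sum.cong) auto
  finally show ?thesis by simp
qed

lemma simple_graph_edgeD:
  assumes "simple_graph V E" "{x, y} \<in> E"
  shows "x \<in> V" "y \<in> V" "x \<noteq> y"
  using assms unfolding simple_graph_def by (metis doubleton_eq_iff)+

lemma finite_edges:
  assumes "simple_graph V E"
  shows "finite E"
proof -
  have "E \<subseteq> Pow V" "finite V"
    using assms unfolding simple_graph_def by auto
  then show ?thesis
    by (meson finite_Pow_iff finite_subset)
qed

lemma mem_nbrs_iff: "simple_graph V E \<Longrightarrow> t \<in> nbrs V E s \<longleftrightarrow> {s, t} \<in> E"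
  unfolding nbrs_def using simple_graph_edgeD[of V E s t] by blast

lemma finite_nbrs: "simple_graph V E \<Longrightarrow> finite (nbrs V E s)"
  unfolding nbrs_def simple_graph_def by auto

lemma deg_gt_0:
  assumes "simple_graph V E" "{s, t} \<in> E"
  shows "0 < deg V E s"
proof -
  have "t \<in> nbrs V E s"
    using mem_nbrs_iff[OF assms(1)] assms(2) by blast
  then show ?thesis
    unfolding deg_def using finite_nbrs[OF assms(1)] card_gt_0_iff by blast
qed

lemma walk_singleton: "walk E [x]"
  by (simp add: walk_def)

lemma walk_Cons_Cons: "walk E (x # y # xs) \<longleftrightarrow> {x, y} \<in> E \<and> walk E (y # xs)"
  by (auto simp: walk_def nth_Cons split: nat.splits)

lemma walk_set_subset:
  assumes "simple_graph V E" "walk E xs" "2 \<le> length xs"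
  shows "set xs \<subseteq> V"
proof
  fix x assume "x \<in> set xs"
  then obtain i where i: "i < length xs" "xs ! i = x"
    by (auto simp: in_set_conv_nth)
  have edge: "{xs ! j, xs ! Suc j} \<in> E" if "Suc j < length xs" for j
    using assms(2) that unfolding walk_def by blast
  show "x \<in> V"
  proof (cases "Suc i < length xs")
    case True
    show ?thesis
      using simple_graph_edgeD(1)[OF assms(1) edge[OF True]] i(2) by simp
  next
    case False
    then have "Suc (i - 1) < length xs" "Suc (i - 1) = i"
      using assms(3) i(1) by auto
    then show ?thesis
      using simple_graph_edgeD(2)[OF assms(1) edge] i(2) by metis
  qed
qed

lemma acyclic_no_triangle:
  assumes "\<nexists>xs. is_cycle E xs" "distinct [x, y, z]" "{x, y} \<in> E" "{y, z} \<in> E" "{z, x} \<in> E"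
  shows False
proof -
  have "is_cycle E [x, y, z]"
    using assms(2-) by (simp add: is_cycle_def walk_Cons_Cons walk_singleton)
  then show False using assms(1) by blast
qed

lemma acyclic_no_square:
  assumes "\<nexists>xs. is_cycle E xs" "distinct [x, y, z, w]"
    "{x, y} \<in> E" "{y, z} \<in> E" "{z, w} \<in> E" "{w, x} \<in> E"
  shows False
proof -
  have "is_cycle E [x, y, z, w]"
    using assms(2-) by (simp add: is_cycle_def walk_Cons_Cons walk_singleton)
  then show False using assms(1) by blast
qed

definition directed_paths :: "'a set set \<Rightarrow> nat \<Rightarrow> 'a list set" where
  "directed_paths E n = {xs. length xs = n \<and> distinct xs \<and> walk E xs}"

definition path_edges :: "'a list \<Rightarrow> 'a set set" where
  "path_edges xs = {{xs ! i, xs ! Suc i} | i. Suc i < length xs}"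

lemma walk_iff_path_edges_subset: "walk E xs \<longleftrightarrow> xs \<noteq> [] \<and> path_edges xs \<subseteq> E"
  by (auto simp: walk_def path_edges_def)

lemma path_edges_singleton: "path_edges [x] = {}"
  by (simp add: path_edges_def)

lemma path_edges_Cons_Cons: "path_edges (x # y # xs) = insert {x, y} (path_edges (y # xs))"
proof (intro equalityI subsetI)
  fix e assume "e \<in> path_edges (x # y # xs)"
  then obtain i where "Suc i < length (x # y # xs)" "e = {(x # y # xs) ! i, (x # y # xs) ! Suc i}"
    by (auto simp: path_edges_def)
  then show "e \<in> insert {x, y} (path_edges (y # xs))"
    by (cases i) (auto simp: path_edges_def)
next
  fix e assume "e \<in> insert {x, y} (path_edges (y # xs))"
  then consider "e = {x, y}" | j where "Suc j < length (y # xs)" "e = {(y # xs) ! j, (y # xs) ! Suc j}"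
    by (auto simp: path_edges_def)
  then show "e \<in> path_edges (x # y # xs)"
  proof cases
    case 1
    then show ?thesis unfolding path_edges_def by force
  next
    case (2 j)
    then show ?thesis unfolding path_edges_def by (auto intro!: exI[of _ "Suc j"])
  qed
qed

lemma path_edges_rev: "path_edges (rev xs) = path_edges xs"
proof -
  have "path_edges (rev xs) \<subseteq> path_edges xs" for xs :: "'a list"
  proof
    fix e assume "e \<in> path_edges (rev xs)"
    then obtain i where i: "Suc i < length xs" "e = {rev xs ! i, rev xs ! Suc i}"
      by (auto simp: path_edges_def)
    define j where "j = length xs - Suc (Suc i)"
    have "Suc j < length xs" "e = {xs ! j, xs ! Suc j}"
      using i by (auto simp: j_def rev_nth Suc_diff_Suc insert_commute)
    then show "e \<in> path_edges xs" unfolding path_edges_def by blast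
  qed
  from this[of xs] this[of "rev xs"] show ?thesis by auto
qed

lemma rev_mem_directed_paths: "xs \<in> directed_paths E n \<Longrightarrow> rev xs \<in> directed_paths E n"
  by (simp add: directed_paths_def walk_iff_path_edges_subset path_edges_rev)

lemma finite_directed_paths:
  assumes "simple_graph V E" "2 \<le> n"
  shows "finite (directed_paths E n)"
proof (rule finite_subset)
  show "directed_paths E n \<subseteq> {xs. set xs \<subseteq> V \<and> length xs = n}"
  proof
    fix xs assume "xs \<in> directed_paths E n"
    then show "xs \<in> {xs. set xs \<subseteq> V \<and> length xs = n}"
      using walk_set_subset[OF assms(1), of xs] assms(2) by (simp add: directed_paths_def)
  qed
  show "finite {xs. set xs \<subseteq> V \<and> length xs = n}"
    using assms(1) unfolding simple_graph_def by (simp add: finite_lists_length_eq)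
qed

lemma length_5_cases:
  assumes "length xs = 5"
  obtains a b c d e where "xs = [a, b, c, d, e]"
  using assms by (auto simp: numeral_eq_Suc length_Suc_conv)

lemma Cons_5_mem_directed_paths_iff:
  "[a, b, c, d, e] \<in> directed_paths E 5 \<longleftrightarrow>
     distinct [a, b, c, d, e] \<and> {a, b} \<in> E \<and> {b, c} \<in> E \<and> {c, d} \<in> E \<and> {d, e} \<in> E"
  by (simp add: directed_paths_def walk_Cons_Cons walk_singleton)

lemma n_L5_eq_card_path_edges:
  assumes "simple_graph V E"
  shows "n_L5 V E = card (path_edges ` directed_paths E 5)"
proof -
  have edges: "{{xs ! i, xs ! Suc i} | i. i < 4} = path_edges xs" if "length xs = 5" for xs :: "'a list"
    using that by (simp add: path_edges_def)
  have walk: "path_edges xs \<subseteq> E \<and> set xs \<subseteq> V \<longleftrightarrow> walk E xs" if "length xs = 5" for xs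
    using that walk_set_subset[OF assms, of xs] by (auto simp: walk_iff_path_edges_subset)
  have "n_L5 V E = card {path_edges xs | xs. xs \<in> directed_paths E 5}"
    unfolding n_L5_def
  proof (intro arg_cong[where f = card] Collect_cong iffI)
    fix F
    assume "F \<subseteq> E \<and> (\<exists>xs. length xs = 5 \<and> distinct xs \<and> set xs \<subseteq> V \<and>
      F = {{xs ! i, xs ! Suc i} | i. i < 4})"
    then obtain xs where xs: "F \<subseteq> E" "length xs = 5" "distinct xs" "set xs \<subseteq> V"
      "F = {{xs ! i, xs ! Suc i} | i. i < 4}"
      by blast
    have "F = path_edges xs"
      using edges[OF xs(2)] xs(5) by simp
    moreover have "walk E xs"
      using walk[OF xs(2)] xs(1,4) calculation by simp
    ultimately show "\<exists>xs. F = path_edges xs \<and> xs \<in> directed_paths E 5"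
      using xs(2,3) unfolding directed_paths_def by blast
  next
    fix F assume "\<exists>xs. F = path_edges xs \<and> xs \<in> directed_paths E 5"
    then obtain xs where xs: "length xs = 5" "distinct xs" "walk E xs" "F = path_edges xs"
      unfolding directed_paths_def by blast
    then show "F \<subseteq> E \<and> (\<exists>xs. length xs = 5 \<and> distinct xs \<and> set xs \<subseteq> V \<and>
      F = {{xs ! i, xs ! Suc i} | i. i < 4})"
      using walk[OF xs(1)] edges[OF xs(1)] by blast
  qed
  then show ?thesis
    by (simp only: Setcompr_eq_image Collect_mem_eq)
qed

lemma path_edges_eq_imp_eq_or_rev:
  assumes xs: "length xs = 5" "distinct xs" and ys: "length ys = 5" "distinct ys"
    and eq: "path_edges ys = path_edges xs"
  shows "ys = xs \<or> ys = rev xs"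
proof -
  obtain a b c d e where xs_eq: "xs = [a, b, c, d, e]"
    using xs(1) by (rule length_5_cases)
  obtain a' b' c' d' e' where ys_eq: "ys = [a', b', c', d', e']"
    using ys(1) by (rule length_5_cases)
  let ?F = "{{a, b}, {b, c}, {c, d}, {d, e}}"
  have F: "{{a', b'}, {b', c'}, {c', d'}, {d', e'}} = ?F"
    using eq by (simp add: xs_eq ys_eq path_edges_Cons_Cons path_edges_singleton)
  have m: "{a', b'} \<in> ?F" "{b', c'} \<in> ?F" "{c', d'} \<in> ?F" "{d', e'} \<in> ?F"
    unfolding F[symmetric] by simp_all
  from m(1) have "(a' = a \<and> b' = b) \<or> (a' = b \<and> b' = a) \<or> (a' = b \<and> b' = c) \<or> (a' = c \<and> b' = b) \<or>
      (a' = c \<and> b' = d) \<or> (a' = d \<and> b' = c) \<or> (a' = d \<and> b' = e) \<or> (a' = e \<and> b' = d)"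
    by (simp add: doubleton_eq_iff)
  then show ?thesis
    by (elim disjE conjE) (use m(2-4) xs(2) ys(2) in \<open>auto simp: xs_eq ys_eq doubleton_eq_iff\<close>)
qed

lemma card_path_edges_fibre:
  assumes "xs \<in> directed_paths E 5"
  shows "card {ys \<in> directed_paths E 5. path_edges ys = path_edges xs} = 2"
proof -
  have "{ys \<in> directed_paths E 5. path_edges ys = path_edges xs} = {xs, rev xs}"
    using assms path_edges_eq_imp_eq_or_rev[of xs] rev_mem_directed_paths[OF assms] path_edges_rev[of xs]
    by (auto simp: directed_paths_def)
  moreover have "rev xs \<noteq> xs"
    using assms by (auto simp: directed_paths_def elim!: length_5_cases)
  ultimately show ?thesis
    by simp
qed

lemma card_directed_paths_5:
  assumes "simple_graph V E"
  shows "card (directed_paths E 5) = 2 * n_L5 V E"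
  unfolding n_L5_eq_card_path_edges[OF assms]
  by (rule card_eq_double_card_image[OF finite_directed_paths[OF assms] card_path_edges_fibre]) simp

lemma directed_paths_5_via_arc:
  assumes sg: "simple_graph V E" and acyclic: "\<nexists>xs. is_cycle E xs" and st: "{s, t} \<in> E"
  shows "{xs \<in> directed_paths E 5. xs ! 2 = s \<and> xs ! 1 = t} =
    (\<lambda>(a, u, w). [a, t, s, u, w]) `
      ((nbrs V E t - {s}) \<times> (SIGMA u:nbrs V E s - {t}. nbrs V E u - {s}))"
    (is "?P = ?f ` ?T")
proof
  show "?P \<subseteq> ?f ` ?T"
  proof
    fix xs assume "xs \<in> ?P"
    then obtain a u w where "xs = [a, t, s, u, w]" "[a, t, s, u, w] \<in> directed_paths E 5"
      by (auto simp: directed_paths_def elim!: length_5_cases)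
    then show "xs \<in> ?f ` ?T"
      using sg by (force simp: Cons_5_mem_directed_paths_iff mem_nbrs_iff insert_commute)
  qed
  have "[a, t, s, u, w] \<in> ?P"
    if "{t, a} \<in> E" "a \<noteq> s" "{s, u} \<in> E" "u \<noteq> t" "{u, w} \<in> E" "w \<noteq> s" for a u w
  proof -
    have "t \<noteq> a" "s \<noteq> t" "s \<noteq> u" "u \<noteq> w"
      using simple_graph_edgeD(3)[OF sg] that st by auto
    moreover have "a \<noteq> u"
      using acyclic_no_triangle[OF acyclic, of a t s] that st calculation by (auto simp: insert_commute)
    moreover have "t \<noteq> w"
      using acyclic_no_triangle[OF acyclic, of t s u] that st calculation by (auto simp: insert_commute)
    moreover have "a \<noteq> w"
      using acyclic_no_square[OF acyclic, of a t s u] that st calculation by (auto simp: insert_commute)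
    ultimately show ?thesis
      using that st by (auto simp: Cons_5_mem_directed_paths_iff insert_commute)
  qed
  then show "?f ` ?T \<subseteq> ?P"
    using sg by (auto simp: mem_nbrs_iff)
qed

lemma card_directed_paths_5_via_arc:
  assumes sg: "simple_graph V E" and "\<nexists>xs. is_cycle E xs" and st: "{s, t} \<in> E"
  shows "card {xs \<in> directed_paths E 5. xs ! 2 = s \<and> xs ! 1 = t} =
    (deg V E t - 1) * (\<Sum>u\<in>nbrs V E s - {t}. deg V E u - 1)"
proof -
  have inj: "inj_on (\<lambda>(a, u, w). [a, t, s, u, w]) X" for X :: "('a \<times> 'a \<times> 'a) set"
    by (auto simp: inj_on_def)
  have card_nbrs_minus: "card (nbrs V E x - {y}) = deg V E x - 1" if "{x, y} \<in> E" for x y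
    using that sg by (simp add: deg_def mem_nbrs_iff insert_commute)
  have "card (SIGMA u:nbrs V E s - {t}. nbrs V E u - {s}) =
      (\<Sum>u\<in>nbrs V E s - {t}. card (nbrs V E u - {s}))"
    using finite_nbrs[OF sg] by (simp add: card_SigmaI)
  also have "\<dots> = (\<Sum>u\<in>nbrs V E s - {t}. deg V E u - 1)"
    by (intro sum.cong refl card_nbrs_minus) (simp add: mem_nbrs_iff[OF sg] insert_commute)
  finally show ?thesis
    unfolding directed_paths_5_via_arc[OF assms] card_image[OF inj] card_cartesian_product
    using card_nbrs_minus st by (simp add: insert_commute)
qed

lemma sum_nbrs_deg_minus_one:
  assumes sg: "simple_graph V E" and st: "{s, t} \<in> E"
  shows "real (\<Sum>u\<in>nbrs V E s - {t}. deg V E u - 1) =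
    real (xi V E s) - real (deg V E t) - real (deg V E s) + 1"
proof -
  have fin: "finite (nbrs V E s)" and t: "t \<in> nbrs V E s"
    using finite_nbrs[OF sg] st by (simp_all add: mem_nbrs_iff[OF sg])
  have "real (\<Sum>u\<in>nbrs V E s - {t}. deg V E u - 1) = (\<Sum>u\<in>nbrs V E s - {t}. real (deg V E u) - 1)"
    unfolding of_nat_sum
  proof (intro sum.cong refl)
    fix u assume "u \<in> nbrs V E s - {t}"
    then have "0 < deg V E u"
      using deg_gt_0[OF sg, of u s] by (simp add: mem_nbrs_iff[OF sg] insert_commute)
    then show "real (deg V E u - 1) = real (deg V E u) - 1"
      by (simp add: of_nat_diff)
  qed
  also have "\<dots> = (\<Sum>u\<in>nbrs V E s. real (deg V E u)) - real (deg V E t) - real (card (nbrs V E s) - 1)"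
    using fin t by (simp add: sum_subtractf sum_diff1)
  moreover have "0 < card (nbrs V E s)"
    using fin t card_gt_0_iff by blast
  ultimately show ?thesis
    by (simp add: xi_def deg_def of_nat_diff)
qed

lemma real_card_directed_paths_5_via_arc:
  assumes sg: "simple_graph V E" and "\<nexists>xs. is_cycle E xs" and st: "{s, t} \<in> E"
  shows "real (card {xs \<in> directed_paths E 5. xs ! 2 = s \<and> xs ! 1 = t}) = g2 V E s t"
proof -
  have "0 < deg V E t"
    using deg_gt_0[OF sg, of t s] st by (simp add: insert_commute)
  then show ?thesis
    unfolding card_directed_paths_5_via_arc[OF assms] of_nat_mult sum_nbrs_deg_minus_one[OF sg st] g2_def
    by (simp add: of_nat_diff)
qed

definition arcs :: "'a set set \<Rightarrow> ('a \<times> 'a) set" where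
  "arcs E = {(s, t). {s, t} \<in> E}"

lemma finite_arcs:
  assumes "simple_graph V E"
  shows "finite (arcs E)"
proof (rule finite_subset)
  show "arcs E \<subseteq> V \<times> V"
    using simple_graph_edgeD[OF assms] by (auto simp: arcs_def)
  show "finite (V \<times> V)"
    using assms by (simp add: simple_graph_def)
qed

lemma sum_arcs_eq_sum_edges:
  assumes "simple_graph V E"
  shows "(\<Sum>(s, t)\<in>arcs E. f s t) = (\<Sum>e\<in>E. \<Sum>(s, t)\<in>{(s, t). e = {s, t}}. f s t)"
proof -
  have "(\<Sum>(s, t)\<in>arcs E. f s t) =
      (\<Sum>e\<in>E. \<Sum>(s, t)\<in>{p \<in> arcs E. (\<lambda>(s, t). {s, t}) p = e}. f s t)"
    by (rule sum.group[symmetric, OF finite_arcs[OF assms] finite_edges[OF assms]])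
      (auto simp: arcs_def)
  also have "\<dots> = (\<Sum>e\<in>E. \<Sum>(s, t)\<in>{(s, t). e = {s, t}}. f s t)"
    by (intro sum.cong refl) (auto simp: arcs_def)
  finally show ?thesis .
qed

lemma card_directed_paths_5_eq_sum_arcs:
  assumes "tree V E"
  shows "real (card (directed_paths E 5)) = (\<Sum>(s, t)\<in>arcs E. g2 V E s t)"
proof -
  have sg: "simple_graph V E" and acyclic: "\<nexists>xs. is_cycle E xs"
    using assms by (simp_all add: tree_def)
  have "(\<lambda>xs. (xs ! 2, xs ! 1)) ` directed_paths E 5 \<subseteq> arcs E"
    by (auto simp: directed_paths_def arcs_def walk_Cons_Cons insert_commute elim!: length_5_cases)
  then have "real (card (directed_paths E 5)) =
      (\<Sum>p\<in>arcs E. real (card {xs \<in> directed_paths E 5. (xs ! 2, xs ! 1) = p}))"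
    using finite_directed_paths[OF sg] finite_arcs[OF sg] by (simp add: card_eq_sum_card_fibres)
  also have "\<dots> = (\<Sum>(s, t)\<in>arcs E. g2 V E s t)"
  proof (intro sum.cong refl, clarify)
    fix s t assume "(s, t) \<in> arcs E"
    then show "real (card {xs \<in> directed_paths E 5. (xs ! 2, xs ! 1) = (s, t)}) = g2 V E s t"
      using real_card_directed_paths_5_via_arc[OF sg acyclic, of s t] by (simp add: arcs_def)
  qed
  finally show ?thesis .
qed

theorem proposition18:
  fixes V :: "'a set" and E :: "'a set set"
  assumes "tree V E"
  shows "real (n_L5 V E) =
    1/2 * (\<Sum>e\<in>E. \<Sum>(s, t)\<in>{(s, t). e = {s, t}}. g2 V E s t)"
proof -
  have sg: "simple_graph V E"
    using assms by (simp add: tree_def)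
  have "2 * real (n_L5 V E) = real (card (directed_paths E 5))"
    using card_directed_paths_5[OF sg] by simp
  also have "\<dots> = (\<Sum>(s, t)\<in>arcs E. g2 V E s t)"
    by (rule card_directed_paths_5_eq_sum_arcs[OF assms])
  also have "\<dots> = (\<Sum>e\<in>E. \<Sum>(s, t)\<in>{(s, t). e = {s, t}}. g2 V E s t)"
    by (rule sum_arcs_eq_sum_edges[OF sg])
  finally show ?thesis
    by simp
qed

end
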